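(* Let $\mathcal{G}=(V,E)$ be a connected hypergraph with $n$ vertices and minimum edge cardinality $3$ (i.e. $\min_{e\in E}|e|=3$). Let $\lambda_{\max}$ be the largest eigenvalue of $A_{\mathcal{G}}$, with unit eigenvector $X_1=((X_1)_1,\dots,(X_1)_n)^t$ having positive entries, let $\alpha=\min_i (X_1)_i$, and let $\theta$ be the second largest eigenvalue of $A_{\mathcal{G}}$ in absolute value (i.e., if $\lambda_1=\lambda_{\max}\ge\lambda_2\ge\dots\ge\lambda_n$ are the eigenvalues, $\theta=\max_{l\ge 2}|\lambda_l|$). Then $$\operatorname{diam}(\mathcal{G})\le\left\lfloor 1+\frac{\log\big((1-\alpha^2)/\alpha^2\big)}{\log(\lambda_{\max}/\theta)}\right\rfloor.$$
   Context: A hypergraph $\mathcal{G}=(V,E)$ has a finite vertex set $V$ and a set $E$ of subsets of $V$ (edges), each of cardinality at least $2$. Two distinct vertices $i,j$ are adjacent if some edge contains both. The adjacency matrix $A_{\mathcal{G}}$ has $(A_{\mathcal{G}})_{ij}=\sum_{e\in E,\, i,j\in e}\frac{1}{|e|-1}$ for $i\ne j$ and zero diagonal. A path of length $l$ between $v_0$ and $v_l$ is an alternating sequence $v_0e_1v_1e_2\dots e_lv_l$ of distinct vertices and distinct edges with $v_{i-1},v_i\in e_i$; the distance $d(i,j)$ is the minimum length of an $i$–$j$ path, and $\operatorname{diam}(\mathcal{G})=\max_{i,j\in V}d(i,j)$. $\mathcal{G}$ is connected if any two vertices are joined by a path. *)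

theory Defs
  imports "Jordan_Normal_Form.Char_Poly"
begin

definition hypergraph :: "nat \<Rightarrow> nat set set \<Rightarrow> bool" where
  "hypergraph n E \<longleftrightarrow> (\<forall>e\<in>E. e \<subseteq> {0..<n} \<and> card e \<ge> 2)"

definition hg_adj :: "nat \<Rightarrow> nat set set \<Rightarrow> real mat" where
  "hg_adj n E = mat n n (\<lambda>(i,j). if i = j then 0
      else (\<Sum>e\<in>{e\<in>E. i \<in> e \<and> j \<in> e}. 1 / (real (card e) - 1)))"

definition hg_path :: "nat set set \<Rightarrow> nat list \<Rightarrow> nat set list \<Rightarrow> bool" where
  "hg_path E vs es \<longleftrightarrow> length vs = length es + 1 \<and> distinct vs \<and> distinct es
     \<and> set es \<subseteq> E \<and> (\<forall>k<length es. vs ! k \<in> es ! k \<and> vs ! (k+1) \<in> es ! k)"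

definition hg_path_between :: "nat set set \<Rightarrow> nat \<Rightarrow> nat \<Rightarrow> nat \<Rightarrow> bool" where
  "hg_path_between E i j l \<longleftrightarrow> (\<exists>vs es. hg_path E vs es \<and> hd vs = i \<and> last vs = j \<and> length es = l)"

definition hg_connected :: "nat \<Rightarrow> nat set set \<Rightarrow> bool" where
  "hg_connected n E \<longleftrightarrow> (\<forall>i<n. \<forall>j<n. \<exists>l. hg_path_between E i j l)"

definition hg_dist :: "nat set set \<Rightarrow> nat \<Rightarrow> nat \<Rightarrow> nat" where
  "hg_dist E i j = (LEAST l. hg_path_between E i j l)"

definition hg_diam :: "nat \<Rightarrow> nat set set \<Rightarrow> nat" where
  "hg_diam n E = Max {hg_dist E i j | i j. i < n \<and> j < n}"

end

theory Submission
  imports Defs "Jordan_Normal_Form.Schur_Decomposition"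
begin

text \<open>The adjacency matrix \<open>A\<close> is symmetric and nonnegative; it is irreducible
  because the hypergraph is connected, and not bipartite because an edge with three vertices
  contains a triangle. A Perron--Frobenius argument with the positive eigenvector \<open>X\<close> shows
  that \<open>\<lambda>\<^sub>m\<^sub>a\<^sub>x\<close> is a simple root of the characteristic polynomial and that every other
  eigenvalue has absolute value below it, so \<open>\<theta> < \<lambda>\<^sub>m\<^sub>a\<^sub>x\<close>. Splitting the unit vectors into their
  components along \<open>X\<close> and orthogonal to \<open>X\<close> gives
  \<open>|(A\<^sup>k)\<^sub>i\<^sub>j - \<lambda>\<^sub>m\<^sub>a\<^sub>x\<^sup>k X\<^sub>i X\<^sub>j| \<le> \<theta>\<^sup>k \<surd>((1 - X\<^sub>i\<^sup>2)(1 - X\<^sub>j\<^sup>2))\<close>. The bound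
  \<open>\<theta>\<^sup>k\<close> for \<open>A\<^sup>k\<close> on the orthogonal complement is obtained without the spectral theorem: the
  trace of \<open>A\<^sup>2\<^sup>k\<close>, computed from a Schur decomposition, bounds a Frobenius norm, and the
  resulting factor \<open>n - 1\<close> disappears when passing to the exponents \<open>2\<^sup>j k\<close>. For the \<open>k\<close> of the
  theorem all entries of \<open>A\<^sup>k\<close> are therefore positive, so any two vertices are joined by a walk,
  hence by a path, of length at most \<open>k\<close>.\<close>

section \<open>Linear algebra on coordinate functions\<close>

text \<open>Vectors of length \<open>n\<close> are modelled as functions \<open>nat \<Rightarrow> real\<close> of which only the values
  below \<open>n\<close> matter; this keeps the linear algebra free of carrier side conditions.\<close>

definition mat_apply :: "real mat \<Rightarrow> nat \<Rightarrow> (nat \<Rightarrow> real) \<Rightarrow> nat \<Rightarrow> real" where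
  "mat_apply A n v = (\<lambda>i. \<Sum>j<n. A $$ (i,j) * v j)"

definition mat_iter :: "real mat \<Rightarrow> nat \<Rightarrow> nat \<Rightarrow> (nat \<Rightarrow> real) \<Rightarrow> nat \<Rightarrow> real" where
  "mat_iter A n k = mat_apply A n ^^ k"

definition unit_fun :: "nat \<Rightarrow> nat \<Rightarrow> real" where
  "unit_fun j = (\<lambda>x. if x = j then 1 else 0)"

definition dot :: "nat \<Rightarrow> (nat \<Rightarrow> real) \<Rightarrow> (nat \<Rightarrow> real) \<Rightarrow> real" where
  "dot n u v = (\<Sum>i<n. u i * v i)"

lemma mat_iter_0 [simp]: "mat_iter A n 0 v = v"
  by (simp add: mat_iter_def)

lemma mat_iter_Suc: "mat_iter A n (Suc k) v = mat_apply A n (mat_iter A n k v)"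
  by (simp add: mat_iter_def)

lemma mat_iter_Suc_right: "mat_iter A n (Suc k) v = mat_iter A n k (mat_apply A n v)"
  by (simp add: mat_iter_def funpow_Suc_right del: funpow.simps)

lemma mat_iter_add: "mat_iter A n (a + b) v = mat_iter A n a (mat_iter A n b v)"
  by (simp add: mat_iter_def funpow_add)

lemma mat_apply_linear:
  "mat_apply A n (\<lambda>x. a * u x + b * v x) = (\<lambda>x. a * mat_apply A n u x + b * mat_apply A n v x)"
  by (auto simp: mat_apply_def sum_distrib_left sum.distrib algebra_simps intro!: ext sum.cong)

lemma mat_iter_linear:
  "mat_iter A n k (\<lambda>x. a * u x + b * v x) = (\<lambda>x. a * mat_iter A n k u x + b * mat_iter A n k v x)"
  by (induction k) (simp_all add: mat_iter_Suc mat_apply_linear)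

lemma mat_apply_cong: "(\<And>j. j < n \<Longrightarrow> u j = v j) \<Longrightarrow> mat_apply A n u = mat_apply A n v"
  by (auto simp: mat_apply_def intro!: ext sum.cong)

lemma mat_iter_eigen:
  assumes "\<And>i. i < n \<Longrightarrow> mat_apply A n v i = c * v i" and "i < n"
  shows "mat_iter A n k v i = c ^ k * v i"
  using assms(2)
proof (induction k arbitrary: i)
  case (Suc k)
  have "mat_apply A n (mat_iter A n k v) = mat_apply A n (\<lambda>j. c ^ k * v j)"
    using Suc.IH by (intro mat_apply_cong) auto
  then show ?case
    using assms(1)[OF Suc.prems] mat_apply_linear[of A n "c ^ k" v 0 v] by (simp add: mat_iter_Suc)
qed simp

lemma mat_iter_entry:
  assumes A: "A \<in> carrier_mat n n" and i: "i < n"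
  shows "mat_iter A n k v i = (\<Sum>j<n. (A ^\<^sub>m k) $$ (i,j) * v j)"
  using i
proof (induction k arbitrary: v)
  case 0
  then show ?case
    using A by (simp add: if_distrib[of "\<lambda>x. x * _"] cong: if_cong)
next
  case (Suc k)
  have Ak: "A ^\<^sub>m k \<in> carrier_mat n n" using pow_carrier_mat[OF A] .
  have "mat_iter A n (Suc k) v i = (\<Sum>j<n. \<Sum>c<n. (A ^\<^sub>m k) $$ (i,j) * A $$ (j,c) * v c)"
    using Suc by (simp add: mat_iter_Suc_right mat_apply_def sum_distrib_left mult.assoc)
  also have "\<dots> = (\<Sum>c<n. \<Sum>j<n. (A ^\<^sub>m k) $$ (i,j) * A $$ (j,c) * v c)"
    by (rule sum.swap)
  also have "\<dots> = (\<Sum>c<n. (A ^\<^sub>m Suc k) $$ (i,c) * v c)"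
    using Suc.prems Ak A
    by (auto simp: scalar_prod_def lessThan_atLeast0 sum_distrib_right intro!: sum.cong)
  finally show ?case .
qed

lemma mat_iter_unit_fun:
  "A \<in> carrier_mat n n \<Longrightarrow> i < n \<Longrightarrow> j < n \<Longrightarrow> mat_iter A n k (unit_fun j) i = (A ^\<^sub>m k) $$ (i,j)"
  by (simp add: mat_iter_entry unit_fun_def if_distrib[of "\<lambda>x. _ * x"] cong: if_cong)

lemma mat_apply_vec:
  "A \<in> carrier_mat n n \<Longrightarrow> v \<in> carrier_vec n \<Longrightarrow> i < n \<Longrightarrow> mat_apply A n (($) v) i = (A *\<^sub>v v) $ i"
  by (auto simp: mat_apply_def scalar_prod_def lessThan_atLeast0 intro!: sum.cong)

lemma dot_commute: "dot n u v = dot n v u"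
  by (simp add: dot_def mult.commute)

lemma dot_cong:
  "(\<And>j. j < n \<Longrightarrow> u j = u' j) \<Longrightarrow> (\<And>j. j < n \<Longrightarrow> v j = v' j) \<Longrightarrow> dot n u v = dot n u' v'"
  by (simp add: dot_def)

lemma dot_linear_right: "dot n w (\<lambda>x. a * u x + b * v x) = a * dot n w u + b * dot n w v"
  by (simp add: dot_def sum_distrib_left sum.distrib algebra_simps)

lemma dot_linear_left: "dot n (\<lambda>x. a * u x + b * v x) w = a * dot n u w + b * dot n v w"
  by (simp add: dot_def sum_distrib_left sum.distrib algebra_simps)

lemma dot_scale_right: "dot n w (\<lambda>x. a * u x) = a * dot n w u"
  using dot_linear_right[of n w a u 0 u] by simp

lemma dot_unit_fun: "j < n \<Longrightarrow> dot n (unit_fun j) u = u j"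
  by (simp add: dot_def unit_fun_def if_distrib[of "\<lambda>x. x * _"] cong: if_cong)

lemma dot_self_nonneg: "dot n u u \<ge> 0"
  by (simp add: dot_def sum_nonneg)

lemma dot_self_eq_0D: "dot n u u = 0 \<Longrightarrow> j < n \<Longrightarrow> u j = 0"
  unfolding dot_def by (subst (asm) sum_nonneg_eq_0_iff) auto

lemma dot_Cauchy_Schwarz: "(dot n u v)\<^sup>2 \<le> dot n u u * dot n v v"
proof (cases "dot n v v = 0")
  case True
  then show ?thesis using dot_self_eq_0D[OF True] by (simp add: dot_def)
next
  case False
  then have pos: "dot n v v > 0" using dot_self_nonneg[of n v] by linarith
  define t where "t = dot n u v / dot n v v"
  have "0 \<le> dot n (\<lambda>x. u x - t * v x) (\<lambda>x. u x - t * v x)" by (rule dot_self_nonneg)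
  also have "\<dots> = dot n u u - 2 * t * dot n u v + t\<^sup>2 * dot n v v"
    by (simp add: dot_def algebra_simps sum.distrib sum_subtractf sum_distrib_left power2_eq_square)
  also have "\<dots> = dot n u u - (dot n u v)\<^sup>2 / dot n v v"
    using pos by (simp add: t_def power2_eq_square field_simps)
  finally show ?thesis using pos by (simp add: field_simps)
qed

section \<open>Traces and Schur decompositions\<close>

definition mat_trace :: "'a::comm_ring_1 mat \<Rightarrow> 'a" where
  "mat_trace A = (\<Sum>i<dim_row A. A $$ (i,i))"

lemma mat_trace_mult_commute:
  assumes "A \<in> carrier_mat n m" and "B \<in> carrier_mat m n"
  shows "mat_trace (A * B) = mat_trace (B * A)"
proof -
  have "mat_trace (A * B) = (\<Sum>i<n. \<Sum>j<m. A $$ (i,j) * B $$ (j,i))"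
    using assms by (auto simp: mat_trace_def scalar_prod_def lessThan_atLeast0 intro!: sum.cong)
  also have "\<dots> = (\<Sum>j<m. \<Sum>i<n. B $$ (j,i) * A $$ (i,j))"
    by (subst sum.swap) (simp add: mult.commute)
  also have "\<dots> = mat_trace (B * A)"
    using assms by (auto simp: mat_trace_def scalar_prod_def lessThan_atLeast0 intro!: sum.cong)
  finally show ?thesis .
qed

lemma mat_trace_similar_mat_wit:
  assumes "similar_mat_wit A B P Q"
  shows "mat_trace A = mat_trace B"
proof -
  note wit = similar_mat_witD[OF refl assms]
  let ?n = "dim_row A"
  have carr: "B \<in> carrier_mat ?n ?n" "P \<in> carrier_mat ?n ?n" "Q \<in> carrier_mat ?n ?n"
    and QP: "Q * P = 1\<^sub>m ?n" and A: "A = P * B * Q"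
    using wit(5-7,2,3) .
  have QPB: "Q * (P * B) = B"
  proof -
    have "Q * (P * B) = (Q * P) * B" by (rule assoc_mult_mat[OF carr(3,2,1), symmetric])
    also have "\<dots> = B" unfolding QP using carr(1) by (rule left_mult_one_mat)
    finally show ?thesis .
  qed
  have "mat_trace A = mat_trace (Q * (P * B))"
    unfolding A by (rule mat_trace_mult_commute[OF mult_carrier_mat[OF carr(2,1)] carr(3)])
  then show ?thesis unfolding QPB .
qed

lemma upper_triangular_mult:
  fixes A B :: "'a::comm_ring_1 mat"
  assumes A: "A \<in> carrier_mat n n" "upper_triangular A"
    and B: "B \<in> carrier_mat n n" "upper_triangular B"
  shows "upper_triangular (A * B) \<and> (\<forall>i<n. (A * B) $$ (i,i) = A $$ (i,i) * B $$ (i,i))"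
proof -
  have entry: "(A * B) $$ (i,j) = A $$ (i,i) * B $$ (i,j)" if ji: "j \<le> i" and i: "i < n" for i j
  proof -
    have "(A * B) $$ (i,j) = (\<Sum>c<n. A $$ (i,c) * B $$ (c,j))"
      using A B ji i by (auto simp: scalar_prod_def lessThan_atLeast0 intro!: sum.cong)
    also have "\<dots> = (\<Sum>c\<in>{i}. A $$ (i,c) * B $$ (c,j))"
    proof (intro sum.mono_neutral_right ballI)
      show "A $$ (i,c) * B $$ (c,j) = 0" if "c \<in> {..<n} - {i}" for c
        using that ji i A B by (cases "c < i") (auto simp: upper_triangularD)
    qed (use i in auto)
    finally show ?thesis by simp
  qed
  have "upper_triangular (A * B)"
  proof (rule upper_triangularI)
    fix i j assume ji: "j < i" and "i < dim_row (A * B)"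
    then have i: "i < n" using A by simp
    have "(A * B) $$ (i,j) = A $$ (i,i) * B $$ (i,j)" using ji i by (intro entry) auto
    also have "B $$ (i,j) = 0" using B ji i by (auto intro: upper_triangularD)
    finally show "(A * B) $$ (i,j) = 0" by simp
  qed
  then show ?thesis using entry[OF order.refl] by blast
qed

lemma upper_triangular_pow:
  fixes A :: "'a::comm_ring_1 mat"
  assumes A: "A \<in> carrier_mat n n" "upper_triangular A"
  shows "upper_triangular (A ^\<^sub>m k) \<and> (\<forall>i<n. (A ^\<^sub>m k) $$ (i,i) = A $$ (i,i) ^ k)"
proof (induction k)
  case (Suc k)
  have "A ^\<^sub>m Suc k = A ^\<^sub>m k * A" by simp
  with upper_triangular_mult[OF pow_carrier_mat[OF A(1)] _ A, of k] Suc show ?case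
    by (simp add: power_Suc2)
qed (use A in auto)

lemma mat_trace_pow_char_poly:
  fixes A :: "'a::conjugatable_ordered_field mat"
  assumes A: "A \<in> carrier_mat n n" and cp: "char_poly A = (\<Prod>a\<leftarrow>ls. [:- a, 1:])"
  shows "mat_trace (A ^\<^sub>m k) = (\<Sum>a\<leftarrow>ls. a ^ k)"
proof -
  obtain B P Q where "schur_decomposition A ls = (B,P,Q)" by (cases "schur_decomposition A ls")
  from schur_decomposition[OF A cp this]
  have wit: "similar_mat_wit A B P Q" and ut: "upper_triangular B" and dg: "diag_mat B = ls"
    by auto
  have B: "B \<in> carrier_mat n n" using similar_mat_witD2[OF A wit] by simp
  have "mat_trace (A ^\<^sub>m k) = mat_trace (B ^\<^sub>m k)"
    by (rule mat_trace_similar_mat_wit[OF similar_mat_wit_pow[OF wit]])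
  also have "\<dots> = (\<Sum>i<n. (B ^\<^sub>m k) $$ (i,i))"
    using B by (simp add: mat_trace_def)
  also have "\<dots> = (\<Sum>i<n. B $$ (i,i) ^ k)"
    using upper_triangular_pow[OF B ut] by simp
  also have "\<dots> = (\<Sum>a\<leftarrow>ls. a ^ k)"
    using B unfolding dg[symmetric] diag_mat_def
    by (simp add: sum_set_upt_conv_sum_list_nat[symmetric] lessThan_atLeast0)
  finally show ?thesis .
qed

lemma upper_triangular_col_sum:
  fixes B :: "'a::comm_ring_1 mat"
  assumes "B \<in> carrier_mat n n" and "upper_triangular B" and "c < n"
  shows "(\<Sum>a<n. f a * B $$ (a,c)) = (\<Sum>a\<le>c. f a * B $$ (a,c))"
  using assms by (intro sum.mono_neutral_right) (auto simp: upper_triangularD)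

text \<open>Columns \<open>0\<close> and \<open>1\<close> of the Schur basis for a double eigenvalue \<open>c\<close>: \<open>p\<close> is an eigenvector,
  \<open>q\<close> a generalized one, and the rows \<open>s, t\<close> of the inverse witness their independence.\<close>

lemma double_root_schur_columns:
  fixes A :: "real mat"
  assumes A: "A \<in> carrier_mat n n" and cp: "char_poly A = (\<Prod>a\<leftarrow>c # c # rest. [:- a, 1:])"
  obtains p q s t :: "nat \<Rightarrow> real" and b :: real
  where "\<And>i. i < n \<Longrightarrow> mat_apply A n p i = c * p i"
    and "\<And>i. i < n \<Longrightarrow> mat_apply A n q i = b * p i + c * q i"
    and "dot n s p = 1" and "dot n s q = 0" and "dot n t q = 1"
proof -
  obtain B P Q where "schur_decomposition A (c # c # rest) = (B,P,Q)"
    by (cases "schur_decomposition A (c # c # rest)")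
  from schur_decomposition[OF A cp this]
  have wit: "similar_mat_wit A B P Q" and ut: "upper_triangular B" and dg: "diag_mat B = c # c # rest"
    by auto
  note wit = similar_mat_witD2[OF A wit]
  have "length (diag_mat B) = n" using wit(5) by (simp add: diag_mat_def)
  then have n: "2 \<le> n" using dg by auto
  have diag: "(c # c # rest) ! k = B $$ (k,k)" if "k < n" for k
    unfolding dg[symmetric] using that wit(5) by (simp add: diag_mat_def)
  have B: "B $$ (0,0) = c" "B $$ (1,1) = c" using diag[of 0] diag[of 1] n by simp_all
  have AP: "A * P = P * B"
  proof -
    have "A * P = P * B * (Q * P)" using wit by (simp add: assoc_mult_mat[of _ n n _ n _ n])
    then show ?thesis using wit by simp
  qed
  have col: "mat_apply A n (\<lambda>j. P $$ (j,k)) i = (\<Sum>a\<le>k. P $$ (i,a) * B $$ (a,k))"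
    if "i < n" "k < n" for i k
  proof -
    have "mat_apply A n (\<lambda>j. P $$ (j,k)) i = (A * P) $$ (i,k)"
      using that A wit by (auto simp: mat_apply_def scalar_prod_def lessThan_atLeast0 intro!: sum.cong)
    also have "\<dots> = (\<Sum>a<n. P $$ (i,a) * B $$ (a,k))"
      using that wit unfolding AP by (auto simp: scalar_prod_def lessThan_atLeast0 intro!: sum.cong)
    finally show ?thesis using upper_triangular_col_sum[OF wit(5) ut that(2)] by simp
  qed
  have QP: "dot n (\<lambda>j. Q $$ (a,j)) (\<lambda>j. P $$ (j,b)) = (if a = b then 1 else 0)"
    if "a < n" "b < n" for a b
  proof -
    have "dot n (\<lambda>j. Q $$ (a,j)) (\<lambda>j. P $$ (j,b)) = (Q * P) $$ (a,b)"
      using that wit(6,7) by (auto simp: dot_def scalar_prod_def lessThan_atLeast0 intro!: sum.cong)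
    also have "Q * P = 1\<^sub>m n" by (rule wit(2))
    finally show ?thesis using that by simp
  qed
  show ?thesis
  proof (rule that[of "\<lambda>j. P $$ (j,0)" "\<lambda>j. P $$ (j,1)" _ "\<lambda>j. Q $$ (0,j)" "\<lambda>j. Q $$ (1,j)"])
    show "mat_apply A n (\<lambda>j. P $$ (j,0)) i = c * P $$ (i,0)" if "i < n" for i
      using col[OF that, of 0] n B by simp
    show "mat_apply A n (\<lambda>j. P $$ (j,1)) i = B $$ (0,1) * P $$ (i,0) + c * P $$ (i,1)" if "i < n" for i
      using col[OF that, of 1] n B by (simp add: atMost_Suc mult.commute)
  qed (use QP n in auto)
qed

section \<open>Symmetric matrices with a spectral gap\<close>

lemma le_if_pow2_powers_le:
  fixes a b C :: real
  assumes "0 \<le> a" and "0 \<le> b" and le: "\<And>j. a ^ (2 ^ j) \<le> C * b ^ (2 ^ j)"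
  shows "a \<le> b"
proof (rule ccontr)
  assume "\<not> a \<le> b"
  then have ab: "b < a" by simp
  show False
  proof (cases "b = 0")
    case True
    then show False using le[of 0] le[of 1] ab by (simp add: power2_eq_square)
  next
    case False
    then have b: "b > 0" using \<open>0 \<le> b\<close> by simp
    define q where "q = a / b"
    have q: "q > 1" using ab b by (simp add: q_def field_simps)
    obtain j :: nat where j: "real j > C / (q - 1)" using reals_Archimedean2 by blast
    have "real j \<le> 2 ^ j" by (metis less_exp of_nat_le_iff of_nat_numeral of_nat_power less_imp_le)
    then have "C < 2 ^ j * (q - 1)"
      using j q by (smt (verit, ccfv_SIG) mult_right_mono pos_divide_less_eq)
    also have "\<dots> < 1 + 2 ^ j * (q - 1)" by simp
    also have "\<dots> \<le> (1 + (q - 1)) ^ (2 ^ j)"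
      using bernoulli_inequality[of "q - 1" "2 ^ j"] q by simp
    finally have "C * b ^ (2 ^ j) < a ^ (2 ^ j)"
      using b by (simp add: q_def power_divide field_simps)
    then show False using le[of j] by simp
  qed
qed

locale symmetric_mat =
  fixes n :: nat and A :: "real mat"
  assumes carrier: "A \<in> carrier_mat n n"
    and symmetric: "\<And>i j. i < n \<Longrightarrow> j < n \<Longrightarrow> A $$ (i,j) = A $$ (j,i)"
begin

lemma dot_mat_apply: "dot n u (mat_apply A n v) = dot n (mat_apply A n u) v"
proof -
  have "dot n u (mat_apply A n v) = (\<Sum>i<n. \<Sum>j<n. u i * A $$ (i,j) * v j)"
    by (simp add: dot_def mat_apply_def sum_distrib_left mult.assoc)
  also have "\<dots> = (\<Sum>j<n. \<Sum>i<n. A $$ (j,i) * u i * v j)"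
    by (subst sum.swap) (simp add: symmetric mult.commute)
  also have "\<dots> = dot n (mat_apply A n u) v"
    by (simp add: dot_def mat_apply_def sum_distrib_right)
  finally show ?thesis .
qed

lemma dot_mat_iter: "dot n u (mat_iter A n k v) = dot n (mat_iter A n k u) v"
proof (induction k arbitrary: u)
  case (Suc k)
  have "dot n u (mat_iter A n (Suc k) v) = dot n (mat_apply A n u) (mat_iter A n k v)"
    by (simp add: mat_iter_Suc dot_mat_apply)
  also have "\<dots> = dot n (mat_iter A n k (mat_apply A n u)) v"
    by (rule Suc.IH)
  finally show ?case by (simp add: mat_iter_Suc_right)
qed simp

lemma generalized_eigenvector_is_eigenvector:
  assumes p: "\<And>i. i < n \<Longrightarrow> mat_apply A n p i = c * p i"
    and q: "\<And>i. i < n \<Longrightarrow> mat_apply A n q i = b * p i + c * q i"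
    and "i < n"
  shows "mat_apply A n q i = c * q i"
proof -
  define w where "w i = 1 * mat_apply A n q i + (- c) * q i" for i
  have w: "w i = b * p i" if "i < n" for i using q[OF that] by (simp add: w_def)
  have "dot n p w = dot n (mat_apply A n p) q - c * dot n p q"
    unfolding w_def[abs_def] dot_linear_right dot_mat_apply by simp
  also have "dot n (mat_apply A n p) q = dot n (\<lambda>i. c * p i) q"
    using p by (intro dot_cong) auto
  finally have "dot n w p = 0" by (simp add: dot_commute dot_scale_right)
  moreover have "dot n w w = b * dot n w p"
    using w by (simp add: dot_scale_right[symmetric] cong: dot_cong)
  ultimately have "w i = 0" using dot_self_eq_0D \<open>i < n\<close> by simp
  then show ?thesis by (simp add: w_def)
qed

lemma sum_sq_entries_pow:
  "(\<Sum>i<n. \<Sum>j<n. ((A ^\<^sub>m k) $$ (i,j))\<^sup>2) = mat_trace (A ^\<^sub>m (2 * k))"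
proof -
  have "(\<Sum>i<n. \<Sum>j<n. ((A ^\<^sub>m k) $$ (i,j))\<^sup>2)
      = (\<Sum>j<n. dot n (mat_iter A n k (unit_fun j)) (mat_iter A n k (unit_fun j)))"
    by (subst sum.swap) (auto simp: dot_def mat_iter_unit_fun[OF carrier] power2_eq_square)
  also have "\<dots> = (\<Sum>j<n. dot n (unit_fun j) (mat_iter A n (2 * k) (unit_fun j)))"
    by (simp add: dot_mat_iter mult_2 mat_iter_add)
  also have "\<dots> = mat_trace (A ^\<^sub>m (2 * k))"
    using carrier by (simp add: dot_unit_fun mat_iter_unit_fun mat_trace_def)
  finally show ?thesis .
qed

end

locale spectral_gap = symmetric_mat +
  fixes X :: "nat \<Rightarrow> real" and lam :: real and rest :: "real list" and th :: real
  assumes eigen: "\<And>i. i < n \<Longrightarrow> mat_apply A n X i = lam * X i"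
    and unit: "dot n X X = 1"
    and char_poly: "char_poly A = (\<Prod>a\<leftarrow>lam # rest. [:- a, 1:])"
    and rest_bounded: "\<And>\<mu>. \<mu> \<in> set rest \<Longrightarrow> \<bar>\<mu>\<bar> \<le> th"
    and th_nonneg: "0 \<le> th"
begin

lemma length_rest: "length rest + 1 = n"
proof -
  have "degree (char_poly A) = n" using degree_monic_char_poly[OF carrier] by simp
  then show ?thesis unfolding char_poly degree_linear_factors by simp
qed

lemma sq_le_1: "i < n \<Longrightarrow> (X i)\<^sup>2 \<le> 1"
  using member_le_sum[of i "{..<n}" "\<lambda>k. (X k)\<^sup>2"] unit by (simp add: dot_def power2_eq_square)

lemma dot_mat_iter_eigen: "dot n u (mat_iter A n k X) = lam ^ k * dot n u X"
proof -
  have "dot n u (mat_iter A n k X) = dot n u (\<lambda>x. lam ^ k * X x)"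
    using mat_iter_eigen[OF eigen] by (intro dot_cong) auto
  then show ?thesis by (simp add: dot_scale_right)
qed

lemma dot_eigen_mat_iter: "dot n X (mat_iter A n k u) = lam ^ k * dot n X u"
proof -
  have "dot n X (mat_iter A n k u) = dot n (mat_iter A n k X) u" by (rule dot_mat_iter)
  also have "\<dots> = dot n u (mat_iter A n k X)" by (rule dot_commute)
  also have "\<dots> = lam ^ k * dot n u X" by (rule dot_mat_iter_eigen)
  finally show ?thesis by (simp only: dot_commute[of n u X])
qed

lemma orth_iter_entry_sq_le:
  assumes rX: "dot n r X = 0" and i: "i < n"
  shows "(mat_iter A n k r i)\<^sup>2 \<le> ((\<Sum>j<n. ((A ^\<^sub>m k) $$ (i,j))\<^sup>2) - (lam ^ k * X i)\<^sup>2) * dot n r r"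
proof -
  define P where "P j = (A ^\<^sub>m k) $$ (i,j)" for j
  define c where "c j = P j - lam ^ k * X i * X j" for j
  have PX: "(\<Sum>j<n. P j * X j) = lam ^ k * X i"
    using mat_iter_entry[OF carrier i, of k X] mat_iter_eigen[OF eigen i] by (simp add: P_def)
  have "mat_iter A n k r i = (\<Sum>j<n. P j * r j)"
    using mat_iter_entry[OF carrier i] by (simp add: P_def)
  also have "\<dots> = dot n c r + lam ^ k * X i * dot n X r"
    by (simp add: c_def dot_def sum_distrib_left sum.distrib[symmetric] algebra_simps)
  finally have "mat_iter A n k r i = dot n c r"
    using rX by (simp add: dot_commute)
  moreover have "dot n c c = (\<Sum>j<n. (P j)\<^sup>2) - (lam ^ k * X i)\<^sup>2"
  proof -
    have "dot n c c = (\<Sum>j<n. (P j)\<^sup>2) - 2 * (lam ^ k * X i) * (\<Sum>j<n. P j * X j)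
        + (lam ^ k * X i)\<^sup>2 * dot n X X"
      by (simp add: c_def dot_def power2_eq_square algebra_simps sum_subtractf sum.distrib
          sum_distrib_left)
    then show ?thesis using PX unit by (simp add: power2_eq_square)
  qed
  ultimately show ?thesis
    using dot_Cauchy_Schwarz[of n c r] by (simp add: P_def)
qed

text \<open>The crude bound comes from the Frobenius norm of \<open>A\<^sup>k\<close> restricted to the orthogonal
  complement of \<open>X\<close>; its factor \<open>n - 1\<close> is removed below by passing to powers \<open>2\<^sup>j k\<close>.\<close>

lemma orth_iter_sq_norm_le_crude:
  assumes rX: "dot n r X = 0"
  shows "dot n (mat_iter A n k r) (mat_iter A n k r) \<le> real (n - 1) * th ^ (2 * k) * dot n r r"
proof -
  have "(\<Sum>i<n. (lam ^ k * X i)\<^sup>2) = (lam ^ k)\<^sup>2 * dot n X X"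
    by (simp add: dot_def power2_eq_square sum_distrib_left mult_ac)
  also have "(lam ^ k)\<^sup>2 = lam ^ (2 * k)"
    by (simp add: power_even_eq)
  finally have sum_sq: "(\<Sum>i<n. (lam ^ k * X i)\<^sup>2) = lam ^ (2 * k)"
    using unit by simp
  have rest_sum: "(\<Sum>\<mu>\<leftarrow>rest. \<mu> ^ (2 * k)) \<le> real (n - 1) * th ^ (2 * k)"
  proof -
    have "(\<Sum>\<mu>\<leftarrow>rest. \<mu> ^ (2 * k)) \<le> (\<Sum>\<mu>\<leftarrow>rest. th ^ (2 * k))"
    proof (rule sum_list_mono)
      fix \<mu> assume "\<mu> \<in> set rest"
      then have "\<bar>\<mu>\<bar> ^ (2 * k) \<le> th ^ (2 * k)" using rest_bounded by (intro power_mono) auto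
      then show "\<mu> ^ (2 * k) \<le> th ^ (2 * k)" by (simp add: power_even_abs)
    qed
    moreover have "n - 1 = length rest" using length_rest by simp
    ultimately show ?thesis by (simp add: sum_list_triv)
  qed
  have "dot n (mat_iter A n k r) (mat_iter A n k r) = (\<Sum>i<n. (mat_iter A n k r i)\<^sup>2)"
    by (simp add: dot_def power2_eq_square)
  also have "\<dots> \<le> (\<Sum>i<n. ((\<Sum>j<n. ((A ^\<^sub>m k) $$ (i,j))\<^sup>2) - (lam ^ k * X i)\<^sup>2) * dot n r r)"
    by (intro sum_mono orth_iter_entry_sq_le[OF rX]) simp
  also have "\<dots> = (mat_trace (A ^\<^sub>m (2 * k)) - lam ^ (2 * k)) * dot n r r"
    by (simp add: sum_distrib_right[symmetric] sum_subtractf sum_sq_entries_pow sum_sq)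
  also have "\<dots> = (\<Sum>\<mu>\<leftarrow>rest. \<mu> ^ (2 * k)) * dot n r r"
    using mat_trace_pow_char_poly[OF carrier char_poly] by simp
  also have "\<dots> \<le> real (n - 1) * th ^ (2 * k) * dot n r r"
    by (rule mult_right_mono[OF rest_sum dot_self_nonneg])
  finally show ?thesis .
qed

lemma orth_iter_sq_norm_le:
  assumes rX: "dot n r X = 0"
  shows "dot n (mat_iter A n k r) (mat_iter A n k r) \<le> th ^ (2 * k) * dot n r r"
proof -
  define N where "N = dot n r r"
  define g where "g m = dot n (mat_iter A n m r) (mat_iter A n m r)" for m
  have g_nonneg: "0 \<le> g m" for m
    by (simp add: g_def dot_self_nonneg)
  have g_crude: "g m \<le> real (n - 1) * th ^ (2 * m) * N" for m
    unfolding g_def N_def by (rule orth_iter_sq_norm_le_crude[OF rX])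
  show ?thesis
  proof (cases "N = 0")
    case True
    then have "g k \<le> 0" using g_crude[of k] by simp
    then show ?thesis using True by (simp add: g_def N_def)
  next
    case False
    then have N: "0 < N" using dot_self_nonneg[of n r] by (simp add: N_def)
    have g_sq: "(g m)\<^sup>2 \<le> N * g (2 * m)" for m
    proof -
      have "g m = dot n r (mat_iter A n (m + m) r)"
        by (simp add: g_def mat_iter_add dot_mat_iter)
      then show ?thesis
        using dot_Cauchy_Schwarz[of n r "mat_iter A n (m + m) r"] by (simp add: g_def N_def mult_2)
    qed
    have doubling: "(g k / N) ^ (2 ^ j) \<le> g (2 ^ j * k) / N" for j
    proof (induction j)
      case (Suc j)
      have "(g k / N) ^ (2 ^ Suc j) = ((g k / N) ^ (2 ^ j))\<^sup>2"
        by (simp add: power_mult[symmetric] mult.commute)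
      also have "\<dots> \<le> (g (2 ^ j * k) / N)\<^sup>2"
        using Suc g_nonneg N by (intro power_mono) auto
      also have "\<dots> \<le> g (2 * (2 ^ j * k)) / N"
        using g_sq[of "2 ^ j * k"] N by (simp add: power2_eq_square field_simps)
      finally show ?case by (simp add: mult.assoc)
    qed simp
    have bound: "(g k / N) ^ (2 ^ j) \<le> real (n - 1) * (th ^ (2 * k)) ^ (2 ^ j)" for j
    proof -
      have "(g k / N) ^ (2 ^ j) \<le> g (2 ^ j * k) / N" by (rule doubling)
      also have "\<dots> \<le> real (n - 1) * th ^ (2 * (2 ^ j * k))"
        using g_crude[of "2 ^ j * k"] N by (simp add: pos_divide_le_eq)
      also have "th ^ (2 * (2 ^ j * k)) = (th ^ (2 * k)) ^ (2 ^ j)"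
        unfolding mult.left_commute[of 2 "2 ^ j" k] by (simp only: power_mult mult.commute)
      finally show ?thesis .
    qed
    have "g k / N \<le> th ^ (2 * k)"
      by (rule le_if_pow2_powers_le[OF _ _ bound]) (use g_nonneg N th_nonneg in auto)
    then have "g k \<le> th ^ (2 * k) * N" using N by (simp add: pos_divide_le_eq)
    then show ?thesis by (simp add: g_def N_def)
  qed
qed

definition orth_part :: "nat \<Rightarrow> nat \<Rightarrow> real" where
  "orth_part j x = unit_fun j x - X j * X x"

lemma unit_fun_split: "unit_fun j = (\<lambda>x. 1 * orth_part j x + X j * X x)"
  by (simp add: orth_part_def)

lemma orth_part_eq: "orth_part j = (\<lambda>x. 1 * unit_fun j x + (- X j) * X x)"
  by (simp add: orth_part_def[abs_def])

lemma dot_orth_part_X: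
  assumes "j < n"
  shows "dot n (orth_part j) X = 0"
proof -
  have "dot n (orth_part j) X = dot n X (orth_part j)" by (rule dot_commute)
  also have "\<dots> = 1 * dot n X (unit_fun j) + (- X j) * dot n X X"
    unfolding orth_part_eq by (rule dot_linear_right)
  also have "dot n X (unit_fun j) = X j" by (subst dot_commute) (rule dot_unit_fun[OF assms])
  finally show ?thesis using unit by simp
qed

lemma dot_orth_part_self:
  assumes "j < n"
  shows "dot n (orth_part j) (orth_part j) = 1 - (X j)\<^sup>2"
proof -
  have "dot n (orth_part j) (orth_part j)
      = 1 * dot n (orth_part j) (unit_fun j) + (- X j) * dot n (orth_part j) X"
    by (subst (2) orth_part_eq) (rule dot_linear_right)
  also have "dot n (orth_part j) (unit_fun j) = orth_part j j"
    by (subst dot_commute) (rule dot_unit_fun[OF assms])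
  also have "orth_part j j = 1 - X j * X j" by (simp add: orth_part_def unit_fun_def)
  finally show ?thesis using dot_orth_part_X[OF assms] by (simp add: power2_eq_square)
qed

lemma iter_entry_decomp:
  assumes i: "i < n" and j: "j < n"
  shows "(A ^\<^sub>m k) $$ (i,j) = dot n (orth_part i) (mat_iter A n k (orth_part j)) + lam ^ k * X i * X j"
proof -
  define w where "w = mat_iter A n k (unit_fun j)"
  have w: "w = (\<lambda>x. 1 * mat_iter A n k (orth_part j) x + X j * mat_iter A n k X x)"
    unfolding w_def by (subst unit_fun_split) (rule mat_iter_linear)
  have "(A ^\<^sub>m k) $$ (i,j) = dot n (unit_fun i) w"
    using mat_iter_unit_fun[OF carrier i j] by (simp add: w_def dot_unit_fun i)
  also have "\<dots> = 1 * dot n (orth_part i) w + X i * dot n X w"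
    by (subst unit_fun_split) (rule dot_linear_left)
  also have "dot n (orth_part i) w = dot n (orth_part i) (mat_iter A n k (orth_part j))"
    unfolding w dot_linear_right dot_mat_iter_eigen dot_orth_part_X[OF i] by simp
  also have "dot n X w = lam ^ k * X j"
  proof -
    have "dot n X (orth_part j) = 0" using dot_orth_part_X[OF j] by (simp add: dot_commute)
    then show ?thesis unfolding w dot_linear_right dot_eigen_mat_iter using unit by simp
  qed
  finally show ?thesis by simp
qed

lemma iter_entry_deviation:
  assumes i: "i < n" and j: "j < n"
  shows "((A ^\<^sub>m k) $$ (i,j) - lam ^ k * X i * X j)\<^sup>2 \<le> th ^ (2 * k) * (1 - (X i)\<^sup>2) * (1 - (X j)\<^sup>2)"
proof -
  have "((A ^\<^sub>m k) $$ (i,j) - lam ^ k * X i * X j)\<^sup>2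
      = (dot n (orth_part i) (mat_iter A n k (orth_part j)))\<^sup>2"
    by (simp add: iter_entry_decomp[OF i j])
  also have "\<dots> \<le> dot n (orth_part i) (orth_part i)
      * dot n (mat_iter A n k (orth_part j)) (mat_iter A n k (orth_part j))"
    by (rule dot_Cauchy_Schwarz)
  also have "\<dots> \<le> dot n (orth_part i) (orth_part i) * (th ^ (2 * k) * dot n (orth_part j) (orth_part j))"
    by (intro mult_left_mono orth_iter_sq_norm_le dot_orth_part_X j dot_self_nonneg)
  finally show ?thesis by (simp add: dot_orth_part_self i j mult_ac)
qed

lemma iter_entry_pos:
  assumes al: "0 < al" "\<And>i. i < n \<Longrightarrow> al \<le> X i" and lam: "0 \<le> lam"
    and K: "th ^ K * (1 - al\<^sup>2) < lam ^ K * al\<^sup>2"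
    and i: "i < n" and j: "j < n"
  shows "0 < (A ^\<^sub>m K) $$ (i,j)"
proof -
  define m where "m = lam ^ K * X i * X j"
  have sq: "al\<^sup>2 \<le> (X i)\<^sup>2" "al\<^sup>2 \<le> (X j)\<^sup>2"
    using al i j by (auto intro: power_mono)
  have "((A ^\<^sub>m K) $$ (i,j) - m)\<^sup>2 \<le> th ^ (2 * K) * (1 - (X i)\<^sup>2) * (1 - (X j)\<^sup>2)"
    unfolding m_def by (rule iter_entry_deviation[OF i j])
  also have "\<dots> \<le> th ^ (2 * K) * (1 - al\<^sup>2) * (1 - al\<^sup>2)"
    using sq sq_le_1[OF i] sq_le_1[OF j] th_nonneg by (intro mult_mono) auto
  also have "\<dots> = (th ^ K * (1 - al\<^sup>2))\<^sup>2"
    by (simp add: power2_eq_square power_mult mult_ac)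
  finally have "\<bar>(A ^\<^sub>m K) $$ (i,j) - m\<bar>\<^sup>2 \<le> (th ^ K * (1 - al\<^sup>2))\<^sup>2" by simp
  then have "\<bar>(A ^\<^sub>m K) $$ (i,j) - m\<bar> \<le> th ^ K * (1 - al\<^sup>2)"
    by (rule power2_le_imp_le) (use th_nonneg sq_le_1[OF i] sq(1) in auto)
  moreover have "lam ^ K * al\<^sup>2 \<le> m"
    unfolding m_def power2_eq_square mult.assoc
    using al(1) al(2)[OF i] al(2)[OF j] lam by (intro mult_left_mono mult_mono) auto
  ultimately show ?thesis using K by linarith
qed

end

section \<open>Hypergraphs: adjacency, paths and diameter\<close>

definition hg_adjacent :: "nat set set \<Rightarrow> nat \<Rightarrow> nat \<Rightarrow> bool" where
  "hg_adjacent E i j \<longleftrightarrow> i \<noteq> j \<and> (\<exists>e\<in>E. i \<in> e \<and> j \<in> e)"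

lemma hypergraph_finite: "hypergraph n E \<Longrightarrow> finite E"
  by (rule finite_subset[of _ "Pow {0..<n}"]) (auto simp: hypergraph_def)

lemma hg_adj_carrier: "hg_adj n E \<in> carrier_mat n n"
  by (simp add: hg_adj_def)

lemma hg_adj_entry:
  "i < n \<Longrightarrow> j < n \<Longrightarrow> hg_adj n E $$ (i,j) =
    (if i = j then 0 else \<Sum>e\<in>{e\<in>E. i \<in> e \<and> j \<in> e}. 1 / (real (card e) - 1))"
  by (simp add: hg_adj_def)

lemma hg_adj_symmetric_mat: "symmetric_mat n (hg_adj n E)"
  by unfold_locales (auto simp: hg_adj_carrier hg_adj_entry conj_commute)

lemma hg_adj_nonneg:
  assumes "hypergraph n E" and "i < n" and "j < n"
  shows "0 \<le> hg_adj n E $$ (i,j)"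
  using assms by (auto simp: hg_adj_entry hypergraph_def intro!: sum_nonneg)

lemma hg_adj_pos_iff:
  assumes E: "hypergraph n E" and i: "i < n" and j: "j < n"
  shows "0 < hg_adj n E $$ (i,j) \<longleftrightarrow> hg_adjacent E i j"
proof -
  define S where "S = {e\<in>E. i \<in> e \<and> j \<in> e}"
  have pos: "0 < 1 / (real (card e) - 1)" if "e \<in> S" for e
    using E that by (auto simp: hypergraph_def S_def)
  have "finite S" using hypergraph_finite[OF E] by (simp add: S_def)
  then have "0 < (\<Sum>e\<in>S. 1 / (real (card e) - 1)) \<longleftrightarrow> S \<noteq> {}"
    using pos by (cases "S = {}") (auto intro!: sum_pos)
  then show ?thesis using i j by (auto simp: hg_adj_entry hg_adjacent_def S_def)
qed

lemma hg_connected_induct: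
  assumes E: "hypergraph n E" and "hg_connected n E"
    and i0: "i0 < n" "P i0"
    and step: "\<And>a b. a < n \<Longrightarrow> b < n \<Longrightarrow> hg_adjacent E a b \<Longrightarrow> P a \<Longrightarrow> P b"
    and j: "j < n"
  shows "P j"
proof -
  obtain l where "hg_path_between E i0 j l" using assms(2) i0 j by (auto simp: hg_connected_def)
  then obtain vs es where p: "hg_path E vs es" and hd: "hd vs = i0" and last: "last vs = j"
    by (auto simp: hg_path_between_def)
  have len: "length vs = length es + 1" using p by (simp add: hg_path_def)
  have on_path: "vs ! k < n \<and> P (vs ! k)" if "k < length vs" for k
    using that
  proof (induction k)
    case 0
    then show ?case using hd i0 by (cases vs) auto
  next
    case (Suc k)
    then have k: "k < length es" using len by simp
    have e: "es ! k \<in> E" "vs ! k \<in> es ! k" "vs ! Suc k \<in> es ! k"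
      using p k by (auto simp: hg_path_def)
    have "vs ! k \<noteq> vs ! Suc k" using p Suc.prems by (auto simp: hg_path_def nth_eq_iff_index_eq)
    then have "hg_adjacent E (vs ! k) (vs ! Suc k)" using e by (auto simp: hg_adjacent_def)
    moreover have "es ! k \<subseteq> {0..<n}" using E e(1) by (simp add: hypergraph_def)
    then have "vs ! Suc k < n" using e(3) by auto
    ultimately show ?case using Suc step by auto
  qed
  have "vs \<noteq> []" using len by auto
  then have "last vs = vs ! (length vs - 1)" and "length vs - 1 < length vs"
    by (auto simp: last_conv_nth)
  then show ?thesis using on_path last by metis
qed

lemma hg_path_drop:
  "hg_path E vs es \<Longrightarrow> q < length vs \<Longrightarrow> hg_path E (drop q vs) (drop q es)"
  by (auto simp: hg_path_def distinct_drop dest: in_set_dropD)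

lemma hg_path_Cons:
  assumes "hg_path E vs es" and "e \<in> E" and "e \<notin> set es" and "i \<notin> set vs"
    and "i \<in> e" and "hd vs \<in> e"
  shows "hg_path E (i # vs) (e # es)"
proof -
  have "vs \<noteq> []" using assms(1) by (auto simp: hg_path_def)
  moreover have "vs ! k \<in> es ! (k - 1)" if "0 < k" "k < length es + 1" for k
    using assms(1) that by (cases k) (auto simp: hg_path_def)
  ultimately show ?thesis
    using assms by (auto simp: hg_path_def nth_Cons' hd_conv_nth)
qed

lemma hg_path_between_suffix:
  assumes "hg_path E vs es" and "last vs = j" and "q < length vs"
  shows "hg_path_between E (vs ! q) j (length es - q)"
  unfolding hg_path_between_def
  using assms hg_path_drop[OF assms(1,3)]
  by (intro exI[of _ "drop q vs"] exI[of _ "drop q es"]) (auto simp: hd_drop_conv_nth last_drop)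

lemma hg_path_between_prepend:
  assumes "hg_path_between E c j l" and "e \<in> E" and "i \<in> e" and "c \<in> e"
  shows "\<exists>l' \<le> l + 1. hg_path_between E i j l'"
proof -
  obtain vs es where p: "hg_path E vs es" and hd: "hd vs = c" and last: "last vs = j"
    and l: "length es = l"
    using assms(1) by (auto simp: hg_path_between_def)
  have len: "length vs = length es + 1" using p by (simp add: hg_path_def)
  consider (visited) q where "q < length vs" "vs ! q = i"
    | (edge_used) q where "i \<notin> set vs" "q < length es" "es ! q = e"
    | (fresh) "i \<notin> set vs" "e \<notin> set es"
    by (metis in_set_conv_nth)
  then show ?thesis
  proof cases
    case visited
    then show ?thesis
      using hg_path_between_suffix[OF p last visited(1)] l by (intro exI[of _ "length es - q"]) auto
  next
    case edge_used
    have "e \<notin> set (drop (q + 1) es)"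
      using p edge_used by (auto simp: hg_path_def in_set_conv_nth nth_eq_iff_index_eq)
    moreover have "vs ! (q + 1) \<in> e" using p edge_used by (auto simp: hg_path_def)
    ultimately have "hg_path E (i # drop (q + 1) vs) (e # drop (q + 1) es)"
      using edge_used len assms(2,3) hg_path_drop[OF p, of "q + 1"]
      by (intro hg_path_Cons) (auto simp: hd_drop_conv_nth dest: in_set_dropD)
    moreover have "last (i # drop (q + 1) vs) = j" using edge_used len last by (simp add: last_drop)
    ultimately have "hg_path_between E i j (length (e # drop (q + 1) es))"
      unfolding hg_path_between_def by fastforce
    then show ?thesis using l by (intro exI[of _ "length (e # drop (q + 1) es)"]) auto
  next
    case fresh
    then have "hg_path E (i # vs) (e # es)" using p hd assms(2-4) by (intro hg_path_Cons) auto
    moreover have "last (i # vs) = j" using last len by auto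
    ultimately have "hg_path_between E i j (l + 1)"
      unfolding hg_path_between_def using l by fastforce
    then show ?thesis by blast
  qed
qed

lemma hg_adj_iter_pos_imp_path:
  assumes E: "hypergraph n E"
    and "0 < mat_iter (hg_adj n E) n k (unit_fun j) i" and "i < n" and "j < n"
  shows "\<exists>l \<le> k. hg_path_between E i j l"
  using assms(2-)
proof (induction k arbitrary: i)
  case 0
  then have "hg_path E [i] []" and "i = j" by (auto simp: hg_path_def unit_fun_def split: if_splits)
  then show ?case unfolding hg_path_between_def by force
next
  case (Suc k)
  define w where "w = mat_iter (hg_adj n E) n k (unit_fun j)"
  have "0 < (\<Sum>c<n. hg_adj n E $$ (i,c) * w c)"
    using Suc.prems(1) by (simp add: mat_iter_Suc mat_apply_def w_def)
  then obtain c where c: "c < n" and "0 < hg_adj n E $$ (i,c) * w c"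
    by (metis (no_types, lifting) lessThan_iff not_le sum_nonpos)
  moreover have "0 \<le> hg_adj n E $$ (i,c)" using hg_adj_nonneg[OF E Suc.prems(2) c] .
  ultimately have "0 < hg_adj n E $$ (i,c)" and "0 < w c" by (auto simp: zero_less_mult_iff)
  then obtain e where "e \<in> E" "i \<in> e" "c \<in> e"
    using hg_adj_pos_iff[OF E Suc.prems(2) c] by (auto simp: hg_adjacent_def)
  moreover obtain l where "l \<le> k" and "hg_path_between E c j l"
    using Suc.IH[of c] \<open>0 < w c\<close> c Suc.prems(3) by (auto simp: w_def)
  ultimately obtain l' where "l' \<le> l + 1" and "hg_path_between E i j l'"
    using hg_path_between_prepend by blast
  then show ?case using \<open>l \<le> k\<close> by (intro exI[of _ l']) auto
qed

lemma hg_diam_le: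
  assumes "0 < n" and paths: "\<And>i j. i < n \<Longrightarrow> j < n \<Longrightarrow> \<exists>l \<le> K. hg_path_between E i j l"
  shows "hg_diam n E \<le> K"
  unfolding hg_diam_def
proof (rule Max.boundedI)
  have "{hg_dist E i j | i j. i < n \<and> j < n} = (\<lambda>(i,j). hg_dist E i j) ` ({..<n} \<times> {..<n})"
    by auto
  then show "finite {hg_dist E i j | i j. i < n \<and> j < n}" by simp
  show "{hg_dist E i j | i j. i < n \<and> j < n} \<noteq> {}" using assms(1) by blast
  show "d \<le> K" if dmem: "d \<in> {hg_dist E i j | i j. i < n \<and> j < n}" for d
  proof -
    obtain i j where "i < n" "j < n" and d: "d = hg_dist E i j" using dmem by blast
    then obtain l where "l \<le> K" and "hg_path_between E i j l" using paths by blast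
    then show ?thesis unfolding d hg_dist_def by (meson Least_le order_trans)
  qed
qed

lemma hypergraph_triangle:
  assumes E: "hypergraph n E" and e: "e \<in> E" "3 \<le> card e"
  obtains a b d where "a < n" "b < n" "d < n"
    and "hg_adjacent E a b" "hg_adjacent E b d" "hg_adjacent E a d"
proof -
  obtain T where "T \<subseteq> e" and "card T = 3" using obtain_subset_with_card_n[OF e(2)] by blast
  then obtain a b d where "{a, b, d} \<subseteq> e" and "a \<noteq> b" "b \<noteq> d" "a \<noteq> d"
    by (auto simp: card_3_iff)
  moreover have "e \<subseteq> {0..<n}" using E e(1) by (simp add: hypergraph_def)
  ultimately show ?thesis using e(1) by (intro that[of a b d]) (auto simp: hg_adjacent_def)
qed

section \<open>Perron--Frobenius theory of the adjacency matrix\<close>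

lemma ex_max_lessThan:
  fixes f :: "nat \<Rightarrow> 'a::linorder"
  assumes "0 < n"
  obtains i0 where "i0 < n" and "\<And>i. i < n \<Longrightarrow> f i \<le> f i0"
proof -
  have "Max (f ` {..<n}) \<in> f ` {..<n}" using assms by (intro Max_in) auto
  then obtain i0 where "i0 < n" and "f i0 = Max (f ` {..<n})" by auto
  then show ?thesis using that by simp
qed

lemma sum_nonneg_le_0_imp_eq_0:
  fixes f :: "nat \<Rightarrow> real"
  assumes "(\<Sum>b<n. f b) \<le> 0" and "\<And>b. b < n \<Longrightarrow> 0 \<le> f b" and "b < n"
  shows "f b = 0"
proof -
  have "(\<Sum>b<n. f b) = 0" using assms(1,2) by (meson antisym sum_nonneg lessThan_iff)
  then show ?thesis using assms(2,3) by (subst (asm) sum_nonneg_eq_0_iff) auto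
qed

lemma prod_list_map_remove1:
  fixes f :: "'a \<Rightarrow> 'b::comm_monoid_mult"
  shows "x \<in> set xs \<Longrightarrow> prod_list (map f xs) = f x * prod_list (map f (remove1 x xs))"
  by (induction xs) (auto simp: mult_ac)

lemma abs_mat_apply_le:
  assumes "\<And>b. b < n \<Longrightarrow> 0 \<le> A $$ (a,b)"
  shows "\<bar>mat_apply A n Y a\<bar> \<le> mat_apply A n (\<lambda>b. \<bar>Y b\<bar>) a"
proof -
  have "\<bar>mat_apply A n Y a\<bar> \<le> (\<Sum>b<n. \<bar>A $$ (a,b) * Y b\<bar>)"
    unfolding mat_apply_def by (rule sum_abs)
  also have "\<dots> = mat_apply A n (\<lambda>b. \<bar>Y b\<bar>) a"
    using assms by (simp add: mat_apply_def abs_mult)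
  finally show ?thesis .
qed

lemma hg_zero_propagates:
  assumes E: "hypergraph n E" and conn: "hg_connected n E"
    and nonneg: "\<And>i. i < n \<Longrightarrow> 0 \<le> Z i"
    and sub: "\<And>a. a < n \<Longrightarrow> Z a = 0 \<Longrightarrow> mat_apply (hg_adj n E) n Z a \<le> 0"
    and i0: "i0 < n" "Z i0 = 0" and j: "j < n"
  shows "Z j = 0"
proof (rule hg_connected_induct[where P = "\<lambda>i. Z i = 0", OF E conn i0 _ j])
  fix a b assume a: "a < n" and b: "b < n" and ab: "hg_adjacent E a b" and Za: "Z a = 0"
  have "hg_adj n E $$ (a,b) * Z b = 0"
    using sub[OF a Za] hg_adj_nonneg[OF E a] nonneg b
    by (intro sum_nonneg_le_0_imp_eq_0[where f = "\<lambda>b. hg_adj n E $$ (a,b) * Z b"])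
      (auto simp: mat_apply_def)
  moreover have "0 < hg_adj n E $$ (a,b)" using hg_adj_pos_iff[OF E a b] ab by simp
  ultimately show "Z b = 0" by simp
qed

locale hypergraph_perron =
  fixes n :: nat and E :: "nat set set" and X :: "nat \<Rightarrow> real" and lam :: real
  assumes hypergraph: "hypergraph n E" and connected: "hg_connected n E"
    and positive: "\<And>i. i < n \<Longrightarrow> 0 < X i"
    and eigen: "\<And>i. i < n \<Longrightarrow> mat_apply (hg_adj n E) n X i = lam * X i"
begin

lemma eigenvector_lam_multiple:
  assumes eY: "\<And>i. i < n \<Longrightarrow> mat_apply (hg_adj n E) n Y i = lam * Y i"
  shows "\<exists>c. \<forall>i<n. Y i = c * X i"
proof (cases "n = 0")
  case False
  then obtain i0 where i0: "i0 < n" and max: "\<And>i. i < n \<Longrightarrow> Y i / X i \<le> Y i0 / X i0"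
    using ex_max_lessThan[of n "\<lambda>i. Y i / X i"] by auto
  define t where "t = Y i0 / X i0"
  define Z where "Z i = t * X i + (- 1) * Y i" for i
  have "Z j = 0" if "j < n" for j
  proof (rule hg_zero_propagates[OF hypergraph connected _ _ i0 _ that])
    show "0 \<le> Z i" if "i < n" for i
      using max[OF that] positive[OF that] by (simp add: Z_def t_def pos_divide_le_eq)
    show "mat_apply (hg_adj n E) n Z a \<le> 0" if "a < n" "Z a = 0" for a
    proof -
      have "mat_apply (hg_adj n E) n Z a = t * (lam * X a) + (- 1) * (lam * Y a)"
        unfolding Z_def[abs_def] mat_apply_linear using eigen[OF that(1)] eY[OF that(1)] by simp
      then show ?thesis using that(2) by (simp add: Z_def algebra_simps)
    qed
    show "Z i0 = 0" using positive[OF i0] by (simp add: Z_def t_def)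
  qed
  then show ?thesis by (intro exI[of _ t]) (auto simp: Z_def)
qed simp

lemma eigenvalue_abs_le:
  assumes eY: "\<And>i. i < n \<Longrightarrow> mat_apply (hg_adj n E) n Y i = \<mu> * Y i"
    and k: "k < n" "Y k \<noteq> 0"
  shows "\<bar>\<mu>\<bar> \<le> lam" and "\<bar>\<mu>\<bar> = lam \<Longrightarrow> \<exists>c>0. \<forall>i<n. \<bar>Y i\<bar> = c * X i"
proof -
  obtain i0 where i0: "i0 < n" and max: "\<And>i. i < n \<Longrightarrow> \<bar>Y i\<bar> / X i \<le> \<bar>Y i0\<bar> / X i0"
    using ex_max_lessThan[of n "\<lambda>i. \<bar>Y i\<bar> / X i"] k by auto
  define c where "c = \<bar>Y i0\<bar> / X i0"
  have c: "0 < c"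
    using max[OF k(1)] k positive[OF k(1)] by (simp add: c_def) (smt (verit) divide_pos_pos)
  have le: "\<bar>Y i\<bar> \<le> c * X i" if "i < n" for i
    using max[OF that] positive[OF that] by (simp add: c_def pos_divide_le_eq)
  have Yi0: "\<bar>Y i0\<bar> = c * X i0" using positive[OF i0] by (simp add: c_def)
  have sub: "\<bar>\<mu>\<bar> * \<bar>Y a\<bar> \<le> mat_apply (hg_adj n E) n (\<lambda>b. \<bar>Y b\<bar>) a" if "a < n" for a
    using abs_mat_apply_le[of n "hg_adj n E" a Y] hg_adj_nonneg[OF hypergraph that] eY[OF that]
    by (simp add: abs_mult)
  have super: "mat_apply (hg_adj n E) n (\<lambda>b. \<bar>Y b\<bar>) a \<le> c * lam * X a" if "a < n" for a
  proof -
    have "mat_apply (hg_adj n E) n (\<lambda>b. \<bar>Y b\<bar>) a \<le> mat_apply (hg_adj n E) n (\<lambda>b. c * X b) a"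
      unfolding mat_apply_def
      using le hg_adj_nonneg[OF hypergraph that] by (intro sum_mono mult_left_mono) auto
    also have "\<dots> = c * lam * X a"
      using eigen[OF that] mat_apply_linear[of "hg_adj n E" n c X 0 X] by simp
    finally show ?thesis .
  qed
  have "c * X i0 * \<bar>\<mu>\<bar> \<le> c * X i0 * lam"
    using sub[OF i0] super[OF i0] Yi0 by (simp add: mult_ac)
  then show "\<bar>\<mu>\<bar> \<le> lam"
    using mult_le_cancel_left_pos[of "c * X i0"] c positive[OF i0] by simp
  show "\<exists>c>0. \<forall>i<n. \<bar>Y i\<bar> = c * X i" if eq: "\<bar>\<mu>\<bar> = lam"
  proof -
    define Z where "Z i = c * X i + (- 1) * \<bar>Y i\<bar>" for i
    have "Z j = 0" if "j < n" for j
    proof (rule hg_zero_propagates[OF hypergraph connected _ _ i0 _ that])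
      show "0 \<le> Z i" if "i < n" for i using le[OF that] by (simp add: Z_def)
      show "Z i0 = 0" using Yi0 by (simp add: Z_def)
      show "mat_apply (hg_adj n E) n Z a \<le> 0" if "a < n" "Z a = 0" for a
      proof -
        have "mat_apply (hg_adj n E) n Z a
            = c * (lam * X a) + (- 1) * mat_apply (hg_adj n E) n (\<lambda>b. \<bar>Y b\<bar>) a"
          unfolding Z_def[abs_def] mat_apply_linear using eigen[OF that(1)] by simp
        moreover have "c * (lam * X a) = lam * \<bar>Y a\<bar>"
          using that(2) by (simp add: Z_def mult.left_commute)
        moreover have "lam * \<bar>Y a\<bar> \<le> mat_apply (hg_adj n E) n (\<lambda>b. \<bar>Y b\<bar>) a"
          using sub[OF that(1)] eq by simp
        ultimately show ?thesis by linarith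
      qed
    qed
    then show ?thesis using c by (intro exI[of _ c]) (auto simp: Z_def)
  qed
qed

text \<open>For the eigenvalue \<open>-\<lambda>\<close> the inequality of \<open>eigenvalue_abs_le\<close> is tight at every vertex,
  which forces the eigenvector to change sign along every edge.\<close>

lemma adjacent_opposite_signs:
  assumes eY: "\<And>i. i < n \<Longrightarrow> mat_apply (hg_adj n E) n Y i = - lam * Y i"
    and k: "k < n" "Y k \<noteq> 0" and lam: "0 \<le> lam"
    and xy: "x < n" "y < n" "hg_adjacent E x y"
  shows "Y x * Y y < 0"
proof -
  obtain c where c: "0 < c" and absY: "\<And>i. i < n \<Longrightarrow> \<bar>Y i\<bar> = c * X i"
    using eigenvalue_abs_le(2)[OF eY k] lam by auto
  have nz: "Y i \<noteq> 0" if "i < n" for i using absY[OF that] c positive[OF that] by auto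
  have abs_eigen: "mat_apply (hg_adj n E) n (\<lambda>b. \<bar>Y b\<bar>) x = lam * \<bar>Y x\<bar>"
  proof -
    have "mat_apply (hg_adj n E) n (\<lambda>b. \<bar>Y b\<bar>) x = mat_apply (hg_adj n E) n (\<lambda>b. c * X b) x"
      using absY by (simp add: mat_apply_def)
    also have "\<dots> = lam * \<bar>Y x\<bar>"
      using eigen[OF xy(1)] absY[OF xy(1)] mat_apply_linear[of "hg_adj n E" n c X 0 X] by simp
    finally show ?thesis .
  qed
  have "(\<Sum>b<n. hg_adj n E $$ (x,b) * (\<bar>Y x\<bar> * \<bar>Y b\<bar> + Y x * Y b))
      = \<bar>Y x\<bar> * mat_apply (hg_adj n E) n (\<lambda>b. \<bar>Y b\<bar>) x + Y x * mat_apply (hg_adj n E) n Y x"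
    by (simp add: mat_apply_def sum_distrib_left sum.distrib algebra_simps)
  also have "\<dots> = 0"
    using abs_eigen eY[OF xy(1)] by (simp add: power2_eq_square[symmetric])
  finally have "hg_adj n E $$ (x,y) * (\<bar>Y x\<bar> * \<bar>Y y\<bar> + Y x * Y y) = 0"
    using hg_adj_nonneg[OF hypergraph xy(1)] xy(2)
    by (intro sum_nonneg_le_0_imp_eq_0[where f = "\<lambda>b. hg_adj n E $$ (x,b) * (\<bar>Y x\<bar> * \<bar>Y b\<bar> + Y x * Y b)"])
      (auto simp flip: abs_mult)
  moreover have "0 < hg_adj n E $$ (x,y)" using hg_adj_pos_iff[OF hypergraph xy(1,2)] xy(3) by simp
  ultimately have "\<bar>Y x * Y y\<bar> + Y x * Y y = 0" by (simp add: abs_mult)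
  moreover have "Y x * Y y \<noteq> 0" using nz xy by simp
  ultimately show ?thesis by linarith
qed

lemma neg_lam_not_eigenvalue:
  assumes eY: "\<And>i. i < n \<Longrightarrow> mat_apply (hg_adj n E) n Y i = - lam * Y i"
    and k: "k < n" "Y k \<noteq> 0" and lam: "0 \<le> lam"
    and triangle: "a < n" "b < n" "d < n" "hg_adjacent E a b" "hg_adjacent E b d" "hg_adjacent E a d"
  shows False
proof -
  have sign: "Y x * Y y < 0" if "x < n" "y < n" "hg_adjacent E x y" for x y
    by (rule adjacent_opposite_signs[where Y = Y and k = k]) (use eY k lam that in auto)
  have "0 < (Y a * Y b) * (Y b * Y d)" using sign triangle by (intro mult_neg_neg) auto
  also have "\<dots> = (Y a * Y d) * (Y b)\<^sup>2" by (simp add: power2_eq_square mult_ac)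
  also have "\<dots> \<le> 0" by (rule mult_nonpos_nonneg) (use sign[OF triangle(1,3,6)] in auto)
  finally show False by simp
qed

lemma lam_simple_root:
  assumes cp: "char_poly (hg_adj n E) = (\<Prod>a\<leftarrow>lam # rest. [:- a, 1:])"
  shows "lam \<notin> set rest"
proof
  assume "lam \<in> set rest"
  have "char_poly (hg_adj n E) = (\<Prod>a\<leftarrow>lam # lam # remove1 lam rest. [:- a, 1:])"
    unfolding cp using prod_list_map_remove1[OF \<open>lam \<in> set rest\<close>, of "\<lambda>a. [:- a, 1:]"]
    by (simp only: list.map prod_list.Cons)
  then obtain p q :: "nat \<Rightarrow> real" and b :: real and s t :: "nat \<Rightarrow> real"
    where p: "\<And>i. i < n \<Longrightarrow> mat_apply (hg_adj n E) n p i = lam * p i"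
      and q: "\<And>i. i < n \<Longrightarrow> mat_apply (hg_adj n E) n q i = b * p i + lam * q i"
      and sp: "dot n s p = 1" and sq: "dot n s q = 0" and tq: "dot n t q = 1"
    by (rule double_root_schur_columns[OF hg_adj_carrier]) (rule that)
  interpret symmetric_mat n "hg_adj n E" by (rule hg_adj_symmetric_mat)
  obtain c1 where c1: "\<And>i. i < n \<Longrightarrow> p i = c1 * X i"
    using eigenvector_lam_multiple[OF p] by blast
  have q_eigen: "mat_apply (hg_adj n E) n q i = lam * q i" if "i < n" for i
    by (rule generalized_eigenvector_is_eigenvector[OF p q that])
  obtain c2 where c2: "\<And>i. i < n \<Longrightarrow> q i = c2 * X i"
    using eigenvector_lam_multiple[OF q_eigen] by blast
  have "dot n s p = c1 * dot n s X" "dot n s q = c2 * dot n s X" "dot n t q = c2 * dot n t X"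
    using c1 c2 by (simp_all add: dot_scale_right[symmetric] cong: dot_cong)
  then show False using sp sq tq by auto
qed

lemma abs_eigenvalue_less:
  assumes cp: "char_poly (hg_adj n E) = (\<Prod>a\<leftarrow>lam # rest. [:- a, 1:])"
    and triangle: "a < n" "b < n" "d < n" "hg_adjacent E a b" "hg_adjacent E b d" "hg_adjacent E a d"
    and \<mu>: "\<mu> \<in> set rest"
  shows "\<bar>\<mu>\<bar> < lam"
proof -
  have "poly (char_poly (hg_adj n E)) \<mu> = 0" unfolding cp using \<mu> by (intro linear_poly_root) simp
  then have "eigenvalue (hg_adj n E) \<mu>" using eigenvalue_root_char_poly[OF hg_adj_carrier] by simp
  then obtain v where "eigenvector (hg_adj n E) v \<mu>" by (auto simp: eigenvalue_def)
  then have v: "v \<in> carrier_vec n" "v \<noteq> 0\<^sub>v n" "hg_adj n E *\<^sub>v v = \<mu> \<cdot>\<^sub>v v"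
    using hg_adj_carrier[of n E] by (auto simp: eigenvector_def)
  then obtain k where k: "k < n" "v $ k \<noteq> 0" by (auto simp: vec_eq_iff)
  have eY: "mat_apply (hg_adj n E) n (vec_index v) i = \<mu> * v $ i" if "i < n" for i
    using mat_apply_vec[OF hg_adj_carrier v(1) that] v that by simp
  have "\<bar>\<mu>\<bar> \<le> lam" using eigenvalue_abs_le(1)[OF eY k] .
  moreover have "\<mu> \<noteq> lam" using lam_simple_root[OF cp] \<mu> by auto
  moreover have "\<mu> \<noteq> - lam" if "0 \<le> lam"
  proof
    assume neg: "\<mu> = - lam"
    show False
      by (rule neg_lam_not_eigenvalue[where Y = "vec_index v" and k = k and a = a and b = b and d = d])
        (use eY neg k that triangle in auto)
  qed
  ultimately show ?thesis by (auto simp: abs_if split: if_split_asm)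
qed

end

lemma hg_adj_spectral_gap:
  assumes E: "hypergraph n E" and conn: "hg_connected n E" and e: "e \<in> E" "3 \<le> card e"
    and cp: "char_poly (hg_adj n E) = (\<Prod>a\<leftarrow>lam # rest. [:- a, 1:])"
    and eigen: "\<And>i. i < n \<Longrightarrow> mat_apply (hg_adj n E) n X i = lam * X i"
    and unit: "dot n X X = 1" and pos: "\<And>i. i < n \<Longrightarrow> 0 < X i"
  shows "spectral_gap n (hg_adj n E) X lam rest (Max (abs ` set rest))"
    and "Max (abs ` set rest) < lam"
proof -
  obtain a b d where triangle: "a < n" "b < n" "d < n"
    "hg_adjacent E a b" "hg_adjacent E b d" "hg_adjacent E a d"
    using hypergraph_triangle[OF E e] .
  interpret hypergraph_perron n E X lam
    using E conn pos eigen by unfold_locales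
  have "length rest + 1 = n"
    using degree_monic_char_poly[OF hg_adj_carrier, of n E] unfolding cp degree_linear_factors by simp
  then have "rest \<noteq> []" using triangle by (auto simp: hg_adjacent_def)
  then have max: "Max (abs ` set rest) \<in> abs ` set rest"
    and le: "\<And>\<mu>. \<mu> \<in> set rest \<Longrightarrow> \<bar>\<mu>\<bar> \<le> Max (abs ` set rest)"
    by auto
  then show "Max (abs ` set rest) < lam" using abs_eigenvalue_less[OF cp triangle] by auto
  have nonneg: "0 \<le> Max (abs ` set rest)" using max by auto
  interpret symmetric_mat n "hg_adj n E" by (rule hg_adj_symmetric_mat)
  show "spectral_gap n (hg_adj n E) X lam rest (Max (abs ` set rest))"
    by unfold_locales (fact eigen unit cp le nonneg)+
qed

section \<open>The diameter bound\<close>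

lemma min_sq_le_half:
  fixes X :: "nat \<Rightarrow> real"
  assumes "(\<Sum>i<n. (X i)\<^sup>2) = 1" and "2 \<le> n" and "0 \<le> al" and "\<And>i. i < n \<Longrightarrow> al \<le> X i"
  shows "al\<^sup>2 \<le> 1 / 2"
proof -
  have "(\<Sum>i<n. al\<^sup>2) \<le> (\<Sum>i<n. (X i)\<^sup>2)" by (intro sum_mono power_mono) (use assms in auto)
  then have "real n * al\<^sup>2 \<le> 1" using assms(1) by simp
  moreover have "2 * al\<^sup>2 \<le> real n * al\<^sup>2" using assms(2) by (intro mult_right_mono) auto
  ultimately show ?thesis by linarith
qed

text \<open>For \<open>th = 0\<close> the exponent is \<open>\<lfloor>1\<rfloor>\<close>, since \<open>ln (lam / 0) = ln 0 = 0\<close> and division by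
  \<open>0\<close> yields \<open>0\<close>.\<close>

lemma floor_exponent_bound:
  fixes lam th a :: real
  assumes lam: "0 < lam" and th: "0 \<le> th" "th < lam" and a: "0 < a" "a \<le> 1 / 2"
  defines "t \<equiv> ln ((1 - a) / a) / ln (lam / th)"
  shows "int (nat \<lfloor>1 + t\<rfloor>) = \<lfloor>1 + t\<rfloor> \<and> th ^ nat \<lfloor>1 + t\<rfloor> * (1 - a) < lam ^ nat \<lfloor>1 + t\<rfloor> * a"
proof (cases "th = 0")
  case True
  then show ?thesis using lam a by (simp add: t_def)
next
  case False
  then have th_pos: "0 < th" using th by simp
  have ln_pos: "0 < ln (lam / th)" using th_pos th by simp
  have "1 \<le> (1 - a) / a" using a by (simp add: field_simps)
  then have t: "0 \<le> t" unfolding t_def using ln_pos by simp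
  define K where "K = nat \<lfloor>1 + t\<rfloor>"
  have K: "int K = \<lfloor>1 + t\<rfloor>" using t by (simp add: K_def)
  then have "t < real K" by linarith
  then have "ln ((1 - a) / a) < real K * ln (lam / th)"
    using ln_pos by (simp add: t_def pos_divide_less_eq)
  also have "\<dots> = ln ((lam / th) ^ K)" using th_pos lam by (simp add: ln_realpow)
  finally have "(1 - a) / a < (lam / th) ^ K"
    using a th_pos lam by (subst (asm) ln_less_cancel_iff) auto
  then have "th ^ K * (1 - a) < lam ^ K * a"
    using th_pos a by (simp add: power_divide field_simps)
  then show ?thesis using K by (simp add: K_def)
qed

lemma hg_diam_le_of_pow_pos:
  assumes E: "hypergraph n E" and "0 < n"
    and pos: "\<And>i j. i < n \<Longrightarrow> j < n \<Longrightarrow> 0 < (hg_adj n E ^\<^sub>m K) $$ (i,j)"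
  shows "hg_diam n E \<le> K"
proof (rule hg_diam_le[OF \<open>0 < n\<close>])
  fix i j assume "i < n" "j < n"
  then show "\<exists>l \<le> K. hg_path_between E i j l"
    using pos mat_iter_unit_fun[OF hg_adj_carrier] by (intro hg_adj_iter_pos_imp_path[OF E]) auto
qed

theorem theorem2:
  fixes n :: nat and E :: "nat set set" and ls :: "real list" and X :: "real vec"
  assumes "hypergraph n E"
    and "hg_connected n E"
    and "E \<noteq> {}" and "Min (card ` E) = 3"
    and "sorted_wrt (\<ge>) ls"
    and "char_poly (hg_adj n E) = (\<Prod>a\<leftarrow>ls. [:- a, 1:])"
    and "eigenvector (hg_adj n E) X (hd ls)"
    and "(\<Sum>i<n. (X $ i)\<^sup>2) = 1"
    and "\<forall>i<n. X $ i > 0"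
  shows "let lmax = hd ls;
             \<alpha> = Min {X $ i | i. i < n};
             \<theta> = Max (abs ` set (tl ls))
         in int (hg_diam n E) \<le> \<lfloor>1 + ln ((1 - \<alpha>\<^sup>2) / \<alpha>\<^sup>2) / ln (lmax / \<theta>)\<rfloor>"
proof -
  note E = assms(1)
  define lam rest where "lam = hd ls" and "rest = tl ls"
  define \<theta> \<alpha> where "\<theta> = Max (abs ` set rest)" and "\<alpha> = Min {X $ i | i. i < n}"
  have "Min (card ` E) \<in> card ` E" using assms(3) hypergraph_finite[OF E] by (intro Min_in) auto
  then obtain e where e: "e \<in> E" "card e = 3" using assms(4) by auto
  then have n: "3 \<le> n" using E card_mono[of "{0..<n}" e] by (auto simp: hypergraph_def)
  have "length ls = n"
    using degree_monic_char_poly[OF hg_adj_carrier, of n E] unfolding assms(6) degree_linear_factors by simp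
  then have ls: "ls = lam # rest" using n by (cases ls) (auto simp: lam_def rest_def)
  have X: "X \<in> carrier_vec n" "hg_adj n E *\<^sub>v X = lam \<cdot>\<^sub>v X"
    using assms(7) hg_adj_carrier[of n E] by (auto simp: eigenvector_def lam_def)
  then have eigen: "mat_apply (hg_adj n E) n (vec_index X) i = lam * X $ i" if "i < n" for i
    using mat_apply_vec[OF hg_adj_carrier X(1) that] that by simp
  have unit: "dot n (vec_index X) (vec_index X) = 1" using assms(8) by (simp add: dot_def power2_eq_square)
  have pos: "\<And>i. i < n \<Longrightarrow> 0 < X $ i" using assms(9) by simp
  note gap = hg_adj_spectral_gap[OF E assms(2) e(1) e(2)[symmetric, THEN eq_refl]
      assms(6)[unfolded ls] eigen unit pos, folded \<theta>_def]
  interpret S: spectral_gap n "hg_adj n E" "vec_index X" lam rest \<theta> by (rule gap(1))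
  have "{X $ i | i. i < n} = vec_index X ` {..<n}" by auto
  then have "\<alpha> \<in> vec_index X ` {..<n}" and \<alpha>_le: "\<And>i. i < n \<Longrightarrow> \<alpha> \<le> X $ i"
    using n unfolding \<alpha>_def by (auto intro!: Min_in Min_le simp: lessThan_empty_iff)
  then have \<alpha>: "0 < \<alpha>" "\<alpha>\<^sup>2 \<le> 1 / 2"
    using assms(8,9) n min_sq_le_half[where X = "vec_index X" and n = n and al = \<alpha>] by auto
  define K where "K = nat \<lfloor>1 + ln ((1 - \<alpha>\<^sup>2) / \<alpha>\<^sup>2) / ln (lam / \<theta>)\<rfloor>"
  have K: "int K = \<lfloor>1 + ln ((1 - \<alpha>\<^sup>2) / \<alpha>\<^sup>2) / ln (lam / \<theta>)\<rfloor>" "\<theta> ^ K * (1 - \<alpha>\<^sup>2) < lam ^ K * \<alpha>\<^sup>2"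
    using floor_exponent_bound[of lam \<theta> "\<alpha>\<^sup>2"] gap(2) S.th_nonneg \<alpha> unfolding K_def by auto
  have "hg_diam n E \<le> K"
    using S.iter_entry_pos[OF \<alpha>(1) \<alpha>_le _ K(2)] gap(2) S.th_nonneg n
    by (intro hg_diam_le_of_pow_pos[OF E]) auto
  then show ?thesis using K(1) by (simp add: Let_def lam_def rest_def \<theta>_def \<alpha>_def)
qed

end
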